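(* Let $S:\mathbb{R}^d\times\mathbb{R}^k\to\mathbb{R}$ be a locally Lipschitz generating family for $L\subset T^*\mathbb{R}^d$, and let $\Phi(x,\eta')=(x,\phi(x,\eta'))$ be a $C^1$ fiberwise diffeomorphism of $\mathbb{R}^d\times\mathbb{R}^k$ (i.e. a $C^1$ diffeomorphism such that each $\eta'\mapsto\phi(x,\eta')$ is a diffeomorphism of $\mathbb{R}^k$). Then $S':=S\circ\Phi$ is also a generating family for $L$.
   Context: A locally Lipschitz family $S:\mathbb{R}^d\times\mathbb{R}^k\to\mathbb{R}$ is called a generating family for $L\subset T^*\mathbb{R}^d$ when $L=\{(x,y)\in T^*\mathbb{R}^d:\exists\eta\in\mathbb{R}^k,\ (y,0)\in\partial S(x,\eta)\}$, where $\partial S$ is Clarke's generalized derivative of $S$ as a function on $\mathbb{R}^d\times\mathbb{R}^k$: for a locally Lipschitz $f$ on $\mathbb{R}^m$, $\partial f(a)$ is the convex hull of the set of limits of $df(x_n)$ over sequences $x_n\to a$ of points where $f$ is differentiable. *)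

theory Defs
  imports "HOL-Analysis.Analysis"
begin

definition locally_lipschitz :: "('a::metric_space \<Rightarrow> 'b::metric_space) \<Rightarrow> bool" where
  "locally_lipschitz f \<longleftrightarrow> (\<forall>z. \<exists>U C. open U \<and> z \<in> U \<and> C-lipschitz_on U f)"

definition clarke_subdiff :: "('a::euclidean_space \<Rightarrow> real) \<Rightarrow> 'a \<Rightarrow> ('a \<Rightarrow>\<^sub>L real) set" where
  "clarke_subdiff f a = convex hull
     {D. \<exists>X Df. X \<longlonglongrightarrow> a \<and> (\<forall>n. (f has_derivative blinfun_apply (Df n)) (at (X n)))
              \<and> Df \<longlonglongrightarrow> D}"

text \<open>Points of T*R^d are pairs (x,y) with y a covector on R^d; the covector (y,0) on
  R^d x R^k is y composed with the first projection.\<close>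
definition generating_family ::
  "('a::euclidean_space \<times> 'b::euclidean_space \<Rightarrow> real) \<Rightarrow> ('a \<times> ('a \<Rightarrow>\<^sub>L real)) set \<Rightarrow> bool" where
  "generating_family S L \<longleftrightarrow> locally_lipschitz S \<and>
     L = {(x, y). \<exists>\<eta>. (y o\<^sub>L fst_blinfun) \<in> clarke_subdiff S (x, \<eta>)}"

definition C1_map :: "('a::euclidean_space \<Rightarrow> 'b::euclidean_space) \<Rightarrow> bool" where
  "C1_map f \<longleftrightarrow> (\<exists>f'. (\<forall>z. (f has_derivative blinfun_apply (f' z)) (at z)) \<and> continuous_on UNIV f')"

definition C1_diffeo :: "('a::euclidean_space \<Rightarrow> 'a) \<Rightarrow> bool" where
  "C1_diffeo f \<longleftrightarrow> bij f \<and> C1_map f \<and> C1_map (inv f)"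

end

theory Submission
  imports Defs
begin

text \<open>A $C^1$ diffeomorphism \<open>P\<close> transforms Clarke's derivative by the chain rule,
  \<open>\<partial>(S \<circ> P)(a) = \<partial>S(P a) \<circ> dP(a)\<close>: along sequences the classical chain rule applies, \<open>dP\<close> is
  continuous so limits are carried along, the inverse \<open>P\<^sup>-\<^sup>1\<close> gives the reverse inclusion, and
  composition with \<open>dP(a)\<close> is linear, hence commutes with convex hulls. If \<open>P\<close> preserves
  the base coordinate then \<open>dP(a)\<close> fixes every horizontal covector \<open>(y, 0)\<close>, so
  \<open>(y, 0) \<in> \<partial>(S \<circ> P)(x, \<eta>')\<close> iff \<open>(y, 0) \<in> \<partial>S(P(x, \<eta>'))\<close>; as \<open>\<eta>'\<close> ranges over the fibre,
  \<open>P(x, \<eta>')\<close> ranges over all \<open>(x, \<eta>)\<close>. Local Lipschitz continuity survives composition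
  with the $C^1$ map \<open>P\<close>.\<close>

definition limit_derivatives :: "('c::euclidean_space \<Rightarrow> real) \<Rightarrow> 'c \<Rightarrow> ('c \<Rightarrow>\<^sub>L real) set" where
  "limit_derivatives f a = {D. \<exists>X Df. X \<longlonglongrightarrow> a \<and> (\<forall>n. (f has_derivative blinfun_apply (Df n)) (at (X n)))
              \<and> Df \<longlonglongrightarrow> D}"

lemma clarke_subdiff_eq_convex_hull: "clarke_subdiff f a = convex hull limit_derivatives f a"
  unfolding clarke_subdiff_def limit_derivatives_def by simp

lemma blinfun_compose_id_right [simp]: "A o\<^sub>L id_blinfun = A"
  by (rule blinfun_eqI) (simp add: blinfun_compose.rep_eq)

lemma blinfun_compose_assoc: "(A o\<^sub>L B) o\<^sub>L C = A o\<^sub>L (B o\<^sub>L C)"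
  by (rule blinfun_eqI) (simp add: blinfun_compose.rep_eq)

lemma linear_blinfun_compose_right: "linear (\<lambda>D. D o\<^sub>L M)"
  by (simp add: bounded_linear.linear bounded_bilinear.bounded_linear_left[OF bounded_bilinear_blinfun_compose])

lemma locally_lipschitz_imp_continuous:
  assumes "locally_lipschitz f"
  shows "continuous_on UNIV f"
proof -
  have "isCont f z" for z
  proof -
    obtain U C where "open U" "z \<in> U" "C-lipschitz_on U f"
      using assms unfolding locally_lipschitz_def by blast
    then show ?thesis
      using lipschitz_on_continuous_on continuous_on_eq_continuous_at by blast
  qed
  then show ?thesis
    by (simp add: continuous_at_imp_continuous_on)
qed

lemma locally_lipschitz_compose:
  assumes g: "locally_lipschitz g" and f: "locally_lipschitz f"
  shows "locally_lipschitz (f \<circ> g)"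
  unfolding locally_lipschitz_def
proof
  fix z
  obtain U B where U: "open U" "z \<in> U" "B-lipschitz_on U g"
    using g unfolding locally_lipschitz_def by blast
  obtain W C where W: "open W" "g z \<in> W" "C-lipschitz_on W f"
    using f unfolding locally_lipschitz_def by blast
  define V where "V = U \<inter> g -` W"
  have "open V"
    unfolding V_def using open_vimage[OF W(1) locally_lipschitz_imp_continuous[OF g]] U(1) by blast
  moreover have "(C * B)-lipschitz_on V (f \<circ> g)"
    by (rule lipschitz_on_compose[OF lipschitz_on_subset[OF U(3)] lipschitz_on_subset[OF W(3)]])
       (auto simp: V_def)
  ultimately show "\<exists>V C. open V \<and> z \<in> V \<and> C-lipschitz_on V (f \<circ> g)"
    using U(2) W(2) unfolding V_def by blast
qed

lemma C1_map_locally_lipschitz: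
  assumes "C1_map f"
  shows "locally_lipschitz f"
  unfolding locally_lipschitz_def
proof
  fix z
  obtain f' where d: "\<And>w. (f has_derivative blinfun_apply (f' w)) (at w)" and c: "continuous_on UNIV f'"
    using assms unfolding C1_map_def by blast
  have "compact (f' ` cball z 1)"
    by (rule compact_continuous_image[OF continuous_on_subset[OF c]]) auto
  then obtain B where B: "\<And>w. w \<in> cball z 1 \<Longrightarrow> norm (f' w) \<le> B"
    using compact_imp_bounded bounded_iff by (metis imageI)
  have "B-lipschitz_on (ball z 1) f"
  proof (rule bounded_derivative_imp_lipschitz[where f' = "\<lambda>w. blinfun_apply (f' w)"])
    show "(f has_derivative blinfun_apply (f' w)) (at w within ball z 1)" for w
      using d has_derivative_at_withinI by blast
    show "onorm (blinfun_apply (f' w)) \<le> B" if "w \<in> ball z 1" for w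
      using B that by (simp add: norm_blinfun.rep_eq)
    show "0 \<le> B"
      using order_trans[OF norm_ge_zero B[of z]] by simp
  qed simp
  then show "\<exists>U C. open U \<and> z \<in> U \<and> C-lipschitz_on U f"
    by (intro exI[of _ "ball z 1"]) auto
qed

lemma C1_map_imp_continuous: "C1_map f \<Longrightarrow> continuous_on UNIV f"
  using C1_map_locally_lipschitz locally_lipschitz_imp_continuous by blast

lemma C1_map_derivative_continuous:
  assumes "C1_map f" and "\<And>z. (f has_derivative blinfun_apply (f' z)) (at z)"
  shows "continuous_on UNIV f'"
proof -
  obtain f'' where d: "\<And>z. (f has_derivative blinfun_apply (f'' z)) (at z)" and "continuous_on UNIV f''"
    using assms(1) unfolding C1_map_def by blast
  moreover have "f'' = f'"
    using has_derivative_unique[OF d assms(2)] by (simp add: blinfun_eqI fun_eq_iff)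
  ultimately show ?thesis by simp
qed

lemma C1_diffeo_inv: "C1_diffeo f \<Longrightarrow> C1_diffeo (inv f)"
  unfolding C1_diffeo_def by (simp add: bij_imp_bij_inv inv_inv_eq)

lemma has_derivative_left_inverse_blinfun:
  assumes "(f has_derivative blinfun_apply A) (at a)" and "(g has_derivative blinfun_apply B) (at (f a))"
    and "\<And>z. g (f z) = z"
  shows "B o\<^sub>L A = id_blinfun"
proof -
  have "((g \<circ> f) has_derivative blinfun_apply B \<circ> blinfun_apply A) (at a)"
    using diff_chain_at[OF assms(1,2)] .
  moreover have "g \<circ> f = (\<lambda>z. z)"
    using assms(3) by auto
  ultimately have "((\<lambda>z. z) has_derivative blinfun_apply (B o\<^sub>L A)) (at a)"
    by (simp add: blinfun_compose.rep_eq)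
  from has_derivative_unique[OF has_derivative_ident this] show ?thesis
    by (intro blinfun_eqI) simp
qed

lemma limit_derivatives_compose:
  fixes f :: "'c::euclidean_space \<Rightarrow> real" and P :: "'d::euclidean_space \<Rightarrow> 'c"
  assumes dP: "\<And>z. (P has_derivative blinfun_apply (P' z)) (at z)" and cP: "continuous_on UNIV P'"
    and Q: "continuous_on UNIV Q" "\<And>w. P (Q w) = w" "Q (P a) = a"
    and D: "D \<in> limit_derivatives f (P a)"
  shows "D o\<^sub>L P' a \<in> limit_derivatives (f \<circ> P) a"
proof -
  obtain X Df where X: "X \<longlonglongrightarrow> P a" and dX: "\<And>n. (f has_derivative blinfun_apply (Df n)) (at (X n))"
    and Df: "Df \<longlonglongrightarrow> D"
    using D unfolding limit_derivatives_def by blast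
  define Y where "Y n = Q (X n)" for n
  have Y: "Y \<longlonglongrightarrow> a"
    unfolding Y_def using continuous_on_tendsto_compose[OF Q(1) X] Q(3) by simp
  have "(\<lambda>n. P' (Y n)) \<longlonglongrightarrow> P' a"
    using continuous_on_tendsto_compose[OF cP Y] by simp
  then have lim: "(\<lambda>n. Df n o\<^sub>L P' (Y n)) \<longlonglongrightarrow> (D o\<^sub>L P' a)"
    using bounded_bilinear.tendsto[OF bounded_bilinear_blinfun_compose Df] by blast
  have "((f \<circ> P) has_derivative blinfun_apply (Df n o\<^sub>L P' (Y n))) (at (Y n))" for n
  proof -
    have "(f has_derivative blinfun_apply (Df n)) (at (P (Y n)))"
      using dX Q(2) by (simp add: Y_def)
    from diff_chain_at[OF dP this] show ?thesis
      by (simp add: blinfun_compose.rep_eq)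
  qed
  with Y lim show ?thesis
    unfolding limit_derivatives_def mem_Collect_eq
    by (intro exI[of _ Y] exI[of _ "\<lambda>n. Df n o\<^sub>L P' (Y n)"]) auto
qed

lemma clarke_subdiff_compose_C1_diffeo:
  fixes f :: "'c::euclidean_space \<Rightarrow> real"
  assumes diffeo: "C1_diffeo P" and dP: "\<And>z. (P has_derivative blinfun_apply (P' z)) (at z)"
  shows "clarke_subdiff (f \<circ> P) a = (\<lambda>D. D o\<^sub>L P' a) ` clarke_subdiff f (P a)"
proof -
  define Q where "Q = inv P"
  have PQ: "\<And>w. P (Q w) = w" and QP: "\<And>z. Q (P z) = z"
    using diffeo unfolding C1_diffeo_def Q_def by (auto simp: bij_is_surj surj_f_inv_f bij_is_inj)
  obtain Q' where dQ: "\<And>z. (Q has_derivative blinfun_apply (Q' z)) (at z)"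
    and cQ: "continuous_on UNIV Q'"
    using diffeo unfolding C1_diffeo_def C1_map_def Q_def by blast
  have cP: "continuous_on UNIV P'"
    using C1_map_derivative_continuous diffeo dP unfolding C1_diffeo_def by blast
  have conP: "continuous_on UNIV P" and conQ: "continuous_on UNIV Q"
    using diffeo C1_map_imp_continuous unfolding C1_diffeo_def Q_def by blast+
  have "limit_derivatives (f \<circ> P) a = (\<lambda>D. D o\<^sub>L P' a) ` limit_derivatives f (P a)"
  proof
    show "(\<lambda>D. D o\<^sub>L P' a) ` limit_derivatives f (P a) \<subseteq> limit_derivatives (f \<circ> P) a"
      using limit_derivatives_compose[OF dP cP conQ PQ QP] by blast
    show "limit_derivatives (f \<circ> P) a \<subseteq> (\<lambda>D. D o\<^sub>L P' a) ` limit_derivatives f (P a)"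
    proof
      fix E assume "E \<in> limit_derivatives (f \<circ> P) a"
      then have "E o\<^sub>L Q' (P a) \<in> limit_derivatives (f \<circ> P \<circ> Q) (P a)"
        using limit_derivatives_compose[OF dQ cQ conP QP] QP by simp
      moreover have "f \<circ> P \<circ> Q = f"
        using PQ by auto
      moreover have "E = (E o\<^sub>L Q' (P a)) o\<^sub>L P' a"
        using has_derivative_left_inverse_blinfun[OF dP dQ QP] by (simp add: blinfun_compose_assoc)
      ultimately show "E \<in> (\<lambda>D. D o\<^sub>L P' a) ` limit_derivatives f (P a)"
        by auto
    qed
  qed
  then show ?thesis
    unfolding clarke_subdiff_eq_convex_hull
    using convex_hull_linear_image[OF linear_blinfun_compose_right] by metis
qed

lemma fst_blinfun_compose_derivative_fiberwise:
  assumes "(P has_derivative blinfun_apply P') (at a)" and "\<And>z. fst (P z) = fst z"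
  shows "fst_blinfun o\<^sub>L P' = fst_blinfun"
proof -
  have "((\<lambda>z. fst (P z)) has_derivative (\<lambda>v. fst (P' v))) (at a)"
    using has_derivative_fst[OF assms(1)] .
  then have "(fst has_derivative (\<lambda>v. fst (P' v))) (at a)"
    using assms(2) by simp
  from has_derivative_unique[OF has_derivative_fst[OF has_derivative_ident] this] show ?thesis
    by (intro blinfun_eqI) (simp add: blinfun_compose.rep_eq)
qed

lemma horizontal_clarke_subdiff_compose_fiberwise_mono:
  fixes f :: "'a::euclidean_space \<times> 'b::euclidean_space \<Rightarrow> real"
  assumes "C1_diffeo P" and "\<And>z. fst (P z) = fst z"
    and "y o\<^sub>L fst_blinfun \<in> clarke_subdiff f (P a)"
  shows "y o\<^sub>L fst_blinfun \<in> clarke_subdiff (f \<circ> P) a"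
proof -
  obtain P' where dP: "\<And>z. (P has_derivative blinfun_apply (P' z)) (at z)"
    using assms(1) unfolding C1_diffeo_def C1_map_def by blast
  have "(y o\<^sub>L fst_blinfun) o\<^sub>L P' a = y o\<^sub>L fst_blinfun"
    using fst_blinfun_compose_derivative_fiberwise[OF dP assms(2)] by (simp add: blinfun_compose_assoc)
  then show ?thesis
    unfolding clarke_subdiff_compose_C1_diffeo[OF assms(1) dP] using assms(3) by (metis image_eqI)
qed

lemma horizontal_clarke_subdiff_compose_fiberwise:
  fixes f :: "'a::euclidean_space \<times> 'b::euclidean_space \<Rightarrow> real"
  assumes diffeo: "C1_diffeo P" and fib: "\<And>z. fst (P z) = fst z"
  shows "y o\<^sub>L fst_blinfun \<in> clarke_subdiff (f \<circ> P) a \<longleftrightarrow> y o\<^sub>L fst_blinfun \<in> clarke_subdiff f (P a)"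
proof
  have PQ: "P (inv P w) = w" and QP: "inv P (P z) = z" for w z
    using diffeo unfolding C1_diffeo_def by (auto simp: bij_is_surj surj_f_inv_f bij_is_inj)
  have "fst (inv P w) = fst w" for w
    using fib[of "inv P w"] PQ by simp
  moreover assume "y o\<^sub>L fst_blinfun \<in> clarke_subdiff (f \<circ> P) a"
  ultimately have "y o\<^sub>L fst_blinfun \<in> clarke_subdiff (f \<circ> P \<circ> inv P) (P a)"
    using horizontal_clarke_subdiff_compose_fiberwise_mono[OF C1_diffeo_inv[OF diffeo]] QP by metis
  moreover have "f \<circ> P \<circ> inv P = f"
    using PQ by auto
  ultimately show "y o\<^sub>L fst_blinfun \<in> clarke_subdiff f (P a)"
    by simp
qed (rule horizontal_clarke_subdiff_compose_fiberwise_mono[OF diffeo fib])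

theorem lemma2p20:
  fixes S :: "'a::euclidean_space \<times> 'b::euclidean_space \<Rightarrow> real"
    and \<phi> :: "'a \<times> 'b \<Rightarrow> 'b"
    and L :: "('a \<times> ('a \<Rightarrow>\<^sub>L real)) set"
  assumes "generating_family S L"
    and "C1_diffeo (\<lambda>(x, \<eta>'). (x, \<phi> (x, \<eta>')))"
    and "\<forall>x. C1_diffeo (\<lambda>\<eta>'. \<phi> (x, \<eta>'))"
  shows "generating_family (S \<circ> (\<lambda>(x, \<eta>'). (x, \<phi> (x, \<eta>')))) L"
proof -
  define P where "P = (\<lambda>(x, \<eta>'). (x, \<phi> (x, \<eta>')))"
  have diffeo: "C1_diffeo P" and fib: "\<And>z. fst (P z) = fst z"
    using assms(2) unfolding P_def by auto
  have S: "locally_lipschitz S" "L = {(x, y). \<exists>\<eta>. y o\<^sub>L fst_blinfun \<in> clarke_subdiff S (x, \<eta>)}"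
    using assms(1) unfolding generating_family_def by auto
  have fibre_onto: "\<exists>\<eta>'. \<phi> (x, \<eta>') = \<eta>" for x \<eta>
    using assms(3) unfolding C1_diffeo_def bij_def surj_def by metis
  have "(\<exists>\<eta>. A (x, \<eta>)) \<longleftrightarrow> (\<exists>\<eta>'. A (P (x, \<eta>')))" for A x
    using fibre_onto unfolding P_def by (metis case_prod_conv)
  then have "(\<exists>\<eta>. y o\<^sub>L fst_blinfun \<in> clarke_subdiff S (x, \<eta>)) \<longleftrightarrow>
        (\<exists>\<eta>'. y o\<^sub>L fst_blinfun \<in> clarke_subdiff (S \<circ> P) (x, \<eta>'))" for x y
    unfolding horizontal_clarke_subdiff_compose_fiberwise[OF diffeo fib] .
  moreover have "locally_lipschitz (S \<circ> P)"
    using locally_lipschitz_compose[OF C1_map_locally_lipschitz S(1)] diffeo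
    unfolding C1_diffeo_def by blast
  ultimately show ?thesis
    unfolding generating_family_def P_def[symmetric] S(2) by simp
qed

end
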